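(* Let $G=(V,E)$ be a connected undirected graph (finite or infinite). Then $G$ has no multiplex $M$ such that both $\widetilde M\neq V$ and $\widetilde M$ is maximal for inclusion in the family $\{\widetilde N: N \text{ a multiplex of } G\}$.
   Context: A graph $G=(V,E)$ has vertex set $V$ and edge set $E\subseteq V^2$; it is undirected if $E$ is irreflexive and symmetric. Implication classes: on $E$ define $(a,b)\Gamma(a',b')$ iff either $a=a'$ and $(b,b')\notin E$, or $b=b'$ and $(a,a')\notin E$; the classes of the transitive closure $\Gamma^*$ are the implication classes. For an implication class $A$, $A^{-1}=\{(b,a):(a,b)\in A\}$ and the color class is $\widehat A=A\cup A^{-1}$. A simplex of rank $r\ge1$ is a complete sub-graph $S=(V_S,E_S)$ of $G$ on $r+1$ vertices whose distinct undirected edges lie in distinct color classes. A multiplex is a set of edges $M(S)=\bigcup\{\widehat A:\widehat A\text{ a color class},\ \widehat A\cap E_S\neq\emptyset\}$ for a simplex $S$; $\widetilde N$ denotes the set of vertices spanned by a multiplex $N$. *)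

theory Defs
  imports Main
begin

definition undirected_graph :: "'a set \<Rightarrow> ('a \<times> 'a) set \<Rightarrow> bool" where
  "undirected_graph V E \<longleftrightarrow> E \<subseteq> V \<times> V \<and> irrefl E \<and> sym E"

definition connected_graph :: "'a set \<Rightarrow> ('a \<times> 'a) set \<Rightarrow> bool" where
  "connected_graph V E \<longleftrightarrow> (\<forall>u\<in>V. \<forall>v\<in>V. (u, v) \<in> E\<^sup>*)"

definition Gamma :: "('a \<times> 'a) set \<Rightarrow> (('a \<times> 'a) \<times> ('a \<times> 'a)) set" where
  "Gamma E = {((a, b), (a', b')). (a, b) \<in> E \<and> (a', b') \<in> E \<and>
      ((a = a' \<and> (b, b') \<notin> E) \<or> (b = b' \<and> (a, a') \<notin> E))}"

definition implication_classes :: "('a \<times> 'a) set \<Rightarrow> ('a \<times> 'a) set set" where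
  "implication_classes E = {(Gamma E)\<^sup>+ `` {e} | e. e \<in> E}"

definition color_classes :: "('a \<times> 'a) set \<Rightarrow> ('a \<times> 'a) set set" where
  "color_classes E = {A \<union> A\<inverse> | A. A \<in> implication_classes E}"

definition sub_edges :: "'a set \<Rightarrow> ('a \<times> 'a) set" where
  "sub_edges S = {(x, y). x \<in> S \<and> y \<in> S \<and> x \<noteq> y}"

definition is_simplex :: "'a set \<Rightarrow> ('a \<times> 'a) set \<Rightarrow> 'a set \<Rightarrow> nat \<Rightarrow> bool" where
  "is_simplex V E S r \<longleftrightarrow> r \<ge> 1 \<and> S \<subseteq> V \<and> finite S \<and> card S = r + 1 \<and>
     sub_edges S \<subseteq> E \<and>
     (\<forall>x y u v C. (x, y) \<in> sub_edges S \<and> (u, v) \<in> sub_edges S \<and>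
        {x, y} \<noteq> {u, v} \<and> C \<in> color_classes E \<and> (x, y) \<in> C \<longrightarrow> (u, v) \<notin> C)"

definition multiplex_of :: "('a \<times> 'a) set \<Rightarrow> 'a set \<Rightarrow> ('a \<times> 'a) set" where
  "multiplex_of E S = \<Union>{C \<in> color_classes E. C \<inter> sub_edges S \<noteq> {}}"

definition is_multiplex :: "'a set \<Rightarrow> ('a \<times> 'a) set \<Rightarrow> ('a \<times> 'a) set \<Rightarrow> bool" where
  "is_multiplex V E M \<longleftrightarrow> (\<exists>S r. is_simplex V E S r \<and> M = multiplex_of E S)"

definition spanned :: "('a \<times> 'a) set \<Rightarrow> 'a set" where
  "spanned N = Field N"

end

theory Submission
  imports Defs
begin

text \<open>Let M be the multiplex of a simplex S and let uw be an edge with u spanned by M and w not.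
  As a union of colour classes, M is closed under Gamma; since w is not spanned, an edge xy of M
  with x adjacent to w must have y adjacent to w too, for otherwise xy Gamma xw would put xw into M.
  Propagating this along Gamma-chains shows that w is adjacent to every vertex of S, and then that
  every edge wx with x spanned by M has the colour of some edge ws with s in S. Keeping one s for
  each colour of the edges ws gives a simplex S' = {w} \<union> R whose multiplex contains all these
  edges; it spans w and everything that M spans, contradicting maximality.\<close>

definition Gamma_closed :: "('a \<times> 'a) set \<Rightarrow> ('a \<times> 'a) set \<Rightarrow> bool" where
  "Gamma_closed E F \<longleftrightarrow> (\<forall>e\<in>F. \<forall>f. (e, f) \<in> Gamma E \<longrightarrow> f \<in> F)"

definition color_class :: "('a \<times> 'a) set \<Rightarrow> 'a \<times> 'a \<Rightarrow> ('a \<times> 'a) set" where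
  "color_class E e = (Gamma E)\<^sup>+ `` {e} \<union> ((Gamma E)\<^sup>+ `` {e})\<inverse>"

definition colors_of :: "('a \<times> 'a) set \<Rightarrow> ('a \<times> 'a) set \<Rightarrow> ('a \<times> 'a) set" where
  "colors_of E F = \<Union>{C \<in> color_classes E. C \<inter> F \<noteq> {}}"

lemma Gamma_subset: "Gamma E \<subseteq> E \<times> E"
  by (auto simp: Gamma_def)

lemma Gamma_refl: "irrefl E \<Longrightarrow> e \<in> E \<Longrightarrow> (e, e) \<in> Gamma E"
  by (auto simp: Gamma_def irrefl_def)

lemma sym_Gamma: "sym E \<Longrightarrow> sym (Gamma E)"
  by (auto simp: Gamma_def sym_def)

lemma Gamma_swap: "sym E \<Longrightarrow> ((a, b), (c, d)) \<in> Gamma E \<Longrightarrow> ((b, a), (d, c)) \<in> Gamma E"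
  by (auto simp: Gamma_def sym_def)

lemma Gamma_trancl_swap:
  assumes "sym E" "((a, b), (c, d)) \<in> (Gamma E)\<^sup>+"
  shows "((b, a), (d, c)) \<in> (Gamma E)\<^sup>+"
  using assms(2)
proof (induction "(c, d)" arbitrary: c d rule: trancl_induct)
  case base
  then show ?case using Gamma_swap[OF assms(1)] by blast
next
  case (step f)
  then show ?case using Gamma_swap[OF assms(1), of "fst f" "snd f"]
    by (metis prod.collapse trancl_into_trancl)
qed

lemma Gamma_trancl_subset: "(Gamma E)\<^sup>+ \<subseteq> E \<times> E"
  using Gamma_subset trancl_subset_Sigma by blast

lemma Gamma_closed_self: "Gamma_closed E E"
  using Gamma_subset by (auto simp: Gamma_closed_def)

lemma Gamma_closed_Union: "(\<And>F. F \<in> \<F> \<Longrightarrow> Gamma_closed E F) \<Longrightarrow> Gamma_closed E (\<Union>\<F>)"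
  unfolding Gamma_closed_def by blast

lemma color_classes_eq: "color_classes E = color_class E ` E"
  by (auto simp: color_classes_def implication_classes_def color_class_def)

lemma color_class_self: "irrefl E \<Longrightarrow> e \<in> E \<Longrightarrow> e \<in> color_class E e"
  by (auto simp: color_class_def intro: Gamma_refl)

lemma color_class_swap: "(x, y) \<in> color_class E e \<Longrightarrow> (y, x) \<in> color_class E e"
  by (auto simp: color_class_def)

lemma color_class_subset: "sym E \<Longrightarrow> color_class E e \<subseteq> E"
  using Gamma_trancl_subset by (fastforce simp: color_class_def dest: symD)

lemma color_class_eq:
  assumes "sym E" "f \<in> color_class E e"
  shows "color_class E f = color_class E e"
proof -
  have sym_trancl_Gamma: "sym ((Gamma E)\<^sup>+)"
    using sym_Gamma[OF assms(1)] by (rule sym_trancl)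
  have same_class: "(Gamma E)\<^sup>+ `` {g} = (Gamma E)\<^sup>+ `` {e}" if "(e, g) \<in> (Gamma E)\<^sup>+" for g
    using that sym_trancl_Gamma by (auto dest: symD intro: trancl_trans)
  have swapped_class: "(Gamma E)\<^sup>+ `` {(y, x)} = ((Gamma E)\<^sup>+ `` {(x, y)})\<inverse>" for x y
    by (auto dest: Gamma_trancl_swap[OF assms(1)])
  obtain x y where f: "f = (x, y)" by fastforce
  from assms(2) consider "(e, f) \<in> (Gamma E)\<^sup>+" | "(e, (y, x)) \<in> (Gamma E)\<^sup>+"
    unfolding color_class_def f by blast
  then show ?thesis
  proof cases
    case 1
    then show ?thesis using same_class by (simp add: color_class_def)
  next
    case 2
    then show ?thesis using same_class[OF 2] swapped_class[of x y]
      by (auto simp: color_class_def f)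
  qed
qed

lemma Gamma_closed_color_class: "sym E \<Longrightarrow> Gamma_closed E (color_class E e)"
  unfolding Gamma_closed_def
  by (metis Image_singleton_iff UnI1 color_class_def color_class_eq r_into_trancl')

lemma color_class_least:
  assumes "sym E" "Gamma_closed E P" "sym P" "e \<in> P"
  shows "color_class E e \<subseteq> P"
proof -
  have "f \<in> P" if "(e, f) \<in> (Gamma E)\<^sup>+" for f
    using that by (induction rule: trancl_induct) (use assms in \<open>auto simp: Gamma_closed_def\<close>)
  then show ?thesis
    using assms(3) by (auto simp: color_class_def dest: symD)
qed

lemma multiplex_of_eq_colors_of: "multiplex_of E S = colors_of E (sub_edges S)"
  by (simp add: multiplex_of_def colors_of_def)

lemma colors_of_mono: "F \<subseteq> G \<Longrightarrow> colors_of E F \<subseteq> colors_of E G"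
  by (auto simp: colors_of_def)

lemma Gamma_closed_neighbour:
  assumes "sym E" "Gamma_closed E F" "F \<subseteq> E" "w \<notin> Field F" "(x, y) \<in> F" "(w, x) \<in> E"
  shows "(w, y) \<in> E"
proof (rule ccontr)
  assume "(w, y) \<notin> E"
  then have "((x, y), (x, w)) \<in> Gamma E"
    using assms(1,3,5,6) by (auto simp: Gamma_def dest: symD)
  then have "(x, w) \<in> F" using assms(2,5) by (auto simp: Gamma_closed_def)
  then show False using assms(4) by (auto simp: Field_def)
qed

text \<open>A Gamma-step between two edges of F joining neighbours of w shares an endpoint, so it
  lifts to a Gamma-step between the corresponding edges at w.\<close>
lemma Gamma_closed_Restr_Image:
  assumes "sym E" "Gamma_closed E F" "F \<subseteq> E" "sym F" "w \<notin> Field F"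
    and "Gamma_closed E K" "K \<subseteq> E"
  shows "Gamma_closed E (Restr F (K `` {w}))"
  unfolding Gamma_closed_def
proof (intro ballI allI impI)
  fix e f assume e: "e \<in> Restr F (K `` {w})" and ef: "(e, f) \<in> Gamma E"
  obtain x y x' y' where xy: "e = (x, y)" and xy': "f = (x', y')" by fastforce
  have "f \<in> F" using e ef assms(2) unfolding Gamma_closed_def by blast
  then have "(y', x') \<in> F" using assms(4) xy' by (auto dest: symD)
  have Kx: "(w, x) \<in> K" and Ky: "(w, y) \<in> K" using e xy by auto
  then have "(w, x) \<in> E" "(w, y) \<in> E" using assms(7) by auto
  from ef consider "x' = x" "(y, y') \<notin> E" | "y' = y" "(x, x') \<notin> E"
    by (auto simp: Gamma_def xy xy')
  then show "f \<in> Restr F (K `` {w})"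
  proof cases
    case 1
    have "(w, y') \<in> E"
      using Gamma_closed_neighbour[OF assms(1-3,5)] \<open>f \<in> F\<close> \<open>(w, x) \<in> E\<close> 1 xy' by simp
    then have "((w, y), (w, y')) \<in> Gamma E"
      using \<open>(w, y) \<in> E\<close> 1 by (simp add: Gamma_def)
    then have "(w, y') \<in> K" using Ky assms(6) by (auto simp: Gamma_closed_def)
    then show ?thesis using \<open>f \<in> F\<close> Kx 1 xy' by simp
  next
    case 2
    have "(w, x') \<in> E"
      using Gamma_closed_neighbour[OF assms(1-3,5)] \<open>(y', x') \<in> F\<close> \<open>(w, y) \<in> E\<close> 2 by simp
    then have "((w, x), (w, x')) \<in> Gamma E"
      using \<open>(w, x) \<in> E\<close> 2 by (simp add: Gamma_def)
    then have "(w, x') \<in> K" using Kx assms(6) by (auto simp: Gamma_closed_def)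
    then show ?thesis using \<open>f \<in> F\<close> Ky 2 xy' by simp
  qed
qed

context
  fixes E :: "('a \<times> 'a) set"
  assumes sym: "sym E" and irrefl: "irrefl E"
begin

lemma colors_of_eq: "colors_of E F = (\<Union>f \<in> F \<inter> E. color_class E f)"
proof
  show "colors_of E F \<subseteq> (\<Union>f \<in> F \<inter> E. color_class E f)"
  proof
    fix g assume "g \<in> colors_of E F"
    then obtain e f where "e \<in> E" "f \<in> F" "f \<in> color_class E e" "g \<in> color_class E e"
      by (auto simp: colors_of_def color_classes_eq)
    then show "g \<in> (\<Union>f \<in> F \<inter> E. color_class E f)"
      using color_class_eq[OF sym] color_class_subset[OF sym] by blast
  qed
  show "(\<Union>f \<in> F \<inter> E. color_class E f) \<subseteq> colors_of E F"
    using color_class_self[OF irrefl] by (fastforce simp: colors_of_def color_classes_eq)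
qed

lemma colors_of_subset: "colors_of E F \<subseteq> E"
  using color_class_subset[OF sym] by (auto simp: colors_of_eq)

lemma sym_colors_of: "sym (colors_of E F)"
  by (auto simp: colors_of_eq sym_def intro: color_class_swap)

lemma Gamma_closed_colors_of: "Gamma_closed E (colors_of E F)"
  unfolding colors_of_eq
  by (rule Gamma_closed_Union) (auto intro: Gamma_closed_color_class[OF sym])

lemma subset_colors_of: "F \<subseteq> E \<Longrightarrow> F \<subseteq> colors_of E F"
  using color_class_self[OF irrefl] by (auto simp: colors_of_eq)

lemma colors_of_least:
  assumes "Gamma_closed E P" "sym P" "F \<inter> E \<subseteq> P"
  shows "colors_of E F \<subseteq> P"
  using color_class_least[OF sym assms(1,2)] assms(3) by (auto simp: colors_of_eq)

lemma colors_of_subset_colors_of: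
  assumes "F \<subseteq> colors_of E G"
  shows "colors_of E F \<subseteq> colors_of E G"
  using assms color_class_eq[OF sym] by (fastforce simp: colors_of_eq)

lemma multiplex_of_subset: "multiplex_of E S \<subseteq> E"
  by (simp add: multiplex_of_eq_colors_of colors_of_subset)

lemma sym_multiplex_of: "sym (multiplex_of E S)"
  by (simp add: multiplex_of_eq_colors_of sym_colors_of)

lemma Gamma_closed_multiplex_of: "Gamma_closed E (multiplex_of E S)"
  by (simp add: multiplex_of_eq_colors_of Gamma_closed_colors_of)

lemma sub_edges_subset_multiplex_of: "sub_edges S \<subseteq> E \<Longrightarrow> sub_edges S \<subseteq> multiplex_of E S"
  by (simp add: multiplex_of_eq_colors_of subset_colors_of)


lemma simplex_subset_neighbours:
  assumes edges: "sub_edges S \<subseteq> E" and outside: "w \<notin> Field (multiplex_of E S)"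
    and "(w, u) \<in> E" "u \<in> Field (multiplex_of E S)"
  shows "S \<subseteq> E `` {w}"
proof -
  let ?M = "multiplex_of E S"
  let ?P = "Restr ?M (E `` {w})"
  note M = Gamma_closed_multiplex_of multiplex_of_subset sym_multiplex_of
    sub_edges_subset_multiplex_of[OF edges]
  have P: "Gamma_closed E ?P"
    using Gamma_closed_Restr_Image[OF sym M(1,2,3) outside Gamma_closed_self] by blast
  have "sym ?P" using M(3) by (auto simp: sym_def)
  obtain y where uy: "(u, y) \<in> ?M" using assms(4) M(3) by (auto simp: Field_def dest: symD)
  then have "(w, y) \<in> E" using Gamma_closed_neighbour[OF sym M(1,2) outside] assms(3) by blast
  with uy assms(3) have "(u, y) \<in> ?P" by simp
  obtain a b where ab: "(a, b) \<in> sub_edges S" "(u, y) \<in> color_class E (a, b)"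
    using uy edges by (auto simp: multiplex_of_eq_colors_of colors_of_eq)
  have "color_class E (a, b) \<subseteq> ?P"
    using color_class_eq[OF sym ab(2)] color_class_least[OF sym P \<open>sym ?P\<close> \<open>(u, y) \<in> ?P\<close>] by simp
  then have "(w, a) \<in> E" using color_class_self[OF irrefl] ab(1) edges by blast
  show ?thesis
  proof
    fix s assume "s \<in> S"
    show "s \<in> E `` {w}"
    proof (cases "s = a")
      case False
      then have "(a, s) \<in> ?M" using ab(1) \<open>s \<in> S\<close> M(4) by (auto simp: sub_edges_def)
      then show ?thesis using Gamma_closed_neighbour[OF sym M(1,2) outside] \<open>(w, a) \<in> E\<close> by blast
    qed (use \<open>(w, a) \<in> E\<close> in simp)
  qed
qed

lemma Field_multiplex_subset:
  assumes edges: "sub_edges S \<subseteq> E" and outside: "w \<notin> Field (multiplex_of E S)"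
    and adjacent: "S \<subseteq> E `` {w}"
  shows "Field (multiplex_of E S) \<subseteq> colors_of E ({w} \<times> S) `` {w}"
proof -
  let ?K = "colors_of E ({w} \<times> S)"
  let ?P = "Restr (multiplex_of E S) (?K `` {w})"
  note M = Gamma_closed_multiplex_of multiplex_of_subset sym_multiplex_of
    sub_edges_subset_multiplex_of[OF edges]
  have P: "Gamma_closed E ?P"
    using Gamma_closed_Restr_Image[OF sym M(1,2,3) outside Gamma_closed_colors_of
        colors_of_subset] .
  have "sym ?P" using M(3) by (auto simp: sym_def)
  have "{w} \<times> S \<subseteq> E" using adjacent by blast
  then have "{w} \<times> S \<subseteq> ?K" by (rule subset_colors_of)
  then have "S \<subseteq> ?K `` {w}" by blast
  then have "sub_edges S \<subseteq> ?P" using M(4) by (auto simp: sub_edges_def)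
  then have "multiplex_of E S \<subseteq> ?P"
    using colors_of_least[OF P \<open>sym ?P\<close>, of "sub_edges S"]
    by (simp add: multiplex_of_eq_colors_of Int_absorb2[OF edges])
  then have "Field (multiplex_of E S) \<subseteq> Field ?P" by (rule mono_Field)
  then show ?thesis using Field_Restr_subset[of "multiplex_of E S" "?K `` {w}"] by (rule order_trans)
qed

end

definition rainbow :: "('a \<times> 'a) set \<Rightarrow> 'a set \<Rightarrow> bool" where
  "rainbow E S \<longleftrightarrow> (\<forall>x y u v C. (x, y) \<in> sub_edges S \<and> (u, v) \<in> sub_edges S \<and>
     {x, y} \<noteq> {u, v} \<and> C \<in> color_classes E \<and> (x, y) \<in> C \<longrightarrow> (u, v) \<notin> C)"

lemma is_simplex_iff_rainbow:
  "is_simplex V E S r \<longleftrightarrow>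
     1 \<le> r \<and> S \<subseteq> V \<and> finite S \<and> card S = r + 1 \<and> sub_edges S \<subseteq> E \<and> rainbow E S"
  by (simp add: is_simplex_def rainbow_def)

lemma sub_edges_mono: "A \<subseteq> B \<Longrightarrow> sub_edges A \<subseteq> sub_edges B"
  by (auto simp: sub_edges_def)

lemma rainbow_subset: "A \<subseteq> B \<Longrightarrow> rainbow E B \<Longrightarrow> rainbow E A"
  unfolding rainbow_def using sub_edges_mono by blast

lemma rainbow_insert:
  assumes "sym E" "rainbow E R" "w \<notin> R"
    and inj: "inj_on (\<lambda>r. color_class E (w, r)) R"
    and new_colors: "\<And>r. r \<in> R \<Longrightarrow> (w, r) \<notin> colors_of E (sub_edges R)"
  shows "rainbow E (insert w R)"
  unfolding rainbow_def
proof (intro allI impI notI)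
  fix x y u v C
  assume "(x, y) \<in> sub_edges (insert w R) \<and> (u, v) \<in> sub_edges (insert w R) \<and>
    {x, y} \<noteq> {u, v} \<and> C \<in> color_classes E \<and> (x, y) \<in> C"
  then have xy: "(x, y) \<in> sub_edges (insert w R)" and uv: "(u, v) \<in> sub_edges (insert w R)"
    and ne: "{x, y} \<noteq> {u, v}" and C: "C \<in> color_classes E" "(x, y) \<in> C" by auto
  assume "(u, v) \<in> C"
  have edge_cases: "(a, b) \<in> sub_edges R \<or> (\<exists>r\<in>R. {a, b} = {w, r})"
    if "(a, b) \<in> sub_edges (insert w R)" for a b
    using that by (auto simp: sub_edges_def insert_commute)
  have at_w: "(w, r) \<in> C" if "(a, b) \<in> C" "{a, b} = {w, r}" for a b r
    using that C(1) color_class_swap by (auto simp: color_classes_eq doubleton_eq_iff)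
  have C_eq: "C = color_class E (w, r)" if "(w, r) \<in> C" for r
    using that C(1) color_class_eq[OF assms(1)] by (auto simp: color_classes_eq)
  have not_mixed: False if "(a, b) \<in> sub_edges R" "(a, b) \<in> C" "r \<in> R" "(w, r) \<in> C" for a b r
    using that C(1) new_colors by (auto simp: colors_of_def)
  from edge_cases[OF xy] edge_cases[OF uv] show False
  proof (elim disjE bexE)
    assume "(x, y) \<in> sub_edges R" "(u, v) \<in> sub_edges R"
    then show False using assms(2) ne C \<open>(u, v) \<in> C\<close> unfolding rainbow_def by blast
  next
    fix r' assume "(x, y) \<in> sub_edges R" "r' \<in> R" "{u, v} = {w, r'}"
    then show False using not_mixed at_w C(2) \<open>(u, v) \<in> C\<close> by blast
  next
    fix r assume "r \<in> R" "{x, y} = {w, r}" "(u, v) \<in> sub_edges R"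
    then show False using not_mixed at_w C(2) \<open>(u, v) \<in> C\<close> by blast
  next
    fix r r' assume r: "r \<in> R" "{x, y} = {w, r}" and r': "r' \<in> R" "{u, v} = {w, r'}"
    have "color_class E (w, r) = color_class E (w, r')"
      using C_eq at_w r r' C(2) \<open>(u, v) \<in> C\<close> by metis
    then have "r = r'" using inj r(1) r'(1) by (auto dest: inj_onD)
    then show False using ne r r' by simp
  qed
qed

lemma connected_graph_boundary_edge:
  assumes "connected_graph V E" "a \<in> X" "a \<in> V" "b \<in> V" "b \<notin> X"
  obtains u w where "(u, w) \<in> E" "u \<in> X" "w \<notin> X"
proof -
  have "(a, b) \<in> E\<^sup>*" using assms(1,3,4) by (simp add: connected_graph_def)
  then show ?thesis
    using assms(2,5) that by (induction rule: rtrancl_induct) auto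
qed

lemma simplex_extend:
  assumes graph: "undirected_graph V E" and simplex: "is_simplex V E S r"
    and "w \<in> V" and outside: "w \<notin> Field (multiplex_of E S)" and adjacent: "S \<subseteq> E `` {w}"
  obtains S' r' where "is_simplex V E S' r'" "colors_of E ({w} \<times> S) \<subseteq> multiplex_of E S'"
proof -
  have sym: "sym E" and irrefl: "irrefl E" and "E \<subseteq> V \<times> V"
    using graph by (auto simp: undirected_graph_def)
  have S: "S \<subseteq> V" "finite S" "sub_edges S \<subseteq> E" "rainbow E S"
    using simplex by (simp_all add: is_simplex_iff_rainbow)
  have "S \<noteq> {}" using simplex by (auto simp: is_simplex_def)
  define c where "c = (\<lambda>s. color_class E (w, s))"
  obtain R where R: "R \<subseteq> S" "inj_on c R" "c ` S = c ` R"
    using subset_image_inj[of "c ` S" c S] by auto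
  have "w \<notin> S" using adjacent irrefl by (auto simp: irrefl_def)
  then have "w \<notin> R" using R(1) by blast
  have "R \<noteq> {}" using R(3) \<open>S \<noteq> {}\<close> by auto
  have "finite R" using R(1) S(2) finite_subset by blast
  define S' where "S' = insert w R"
  have star: "{w} \<times> R \<subseteq> sub_edges S'"
    using \<open>w \<notin> R\<close> by (auto simp: S'_def sub_edges_def)
  have "sub_edges S' \<subseteq> E"
    using sub_edges_mono[OF R(1)] S(3) R(1) adjacent sym
    by (auto simp: S'_def sub_edges_def dest: symD)
  have "colors_of E (sub_edges R) \<subseteq> multiplex_of E S"
    using colors_of_mono[OF sub_edges_mono[OF R(1)]] by (simp add: multiplex_of_eq_colors_of)
  then have "(w, r) \<notin> colors_of E (sub_edges R)" for r
    using outside by (auto simp: Field_def)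
  then have "rainbow E S'"
    unfolding S'_def using rainbow_insert[OF sym rainbow_subset[OF R(1) S(4)] \<open>w \<notin> R\<close>] R(2)
    by (simp add: c_def)
  moreover have "S' \<subseteq> V" "finite S'" "card S' = card R + 1" "1 \<le> card R"
    using \<open>w \<in> V\<close> R(1) S(1) \<open>finite R\<close> \<open>w \<notin> R\<close> \<open>R \<noteq> {}\<close>
    by (auto simp: S'_def Suc_le_eq card_gt_0_iff)
  ultimately have "is_simplex V E S' (card R)"
    using \<open>sub_edges S' \<subseteq> E\<close> by (simp add: is_simplex_iff_rainbow)
  moreover have "{w} \<times> S \<subseteq> colors_of E ({w} \<times> R)"
  proof safe
    fix s assume "s \<in> S"
    then obtain r where "r \<in> R" "c s = c r" using R(3) by (metis imageE imageI)
    moreover have "(w, s) \<in> c s" "(w, r) \<in> E"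
      using \<open>s \<in> S\<close> \<open>r \<in> R\<close> R(1) adjacent color_class_self[OF irrefl] by (auto simp: c_def)
    ultimately show "(w, s) \<in> colors_of E ({w} \<times> R)"
      by (auto simp: colors_of_eq[OF sym irrefl] c_def)
  qed
  then have "colors_of E ({w} \<times> S) \<subseteq> multiplex_of E S'"
    using colors_of_subset_colors_of[OF sym irrefl] colors_of_mono[OF star]
    by (metis multiplex_of_eq_colors_of order_trans)
  ultimately show ?thesis using that by blast
qed

lemma exists_multiplex_beyond:
  assumes graph: "undirected_graph V E" and "is_multiplex V E M"
    and "(u, w) \<in> E" "u \<in> Field M" "w \<notin> Field M"
  obtains N where "is_multiplex V E N" "insert w (Field M) \<subseteq> Field N"
proof -
  have sym: "sym E" and irrefl: "irrefl E" and "E \<subseteq> V \<times> V"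
    using graph by (auto simp: undirected_graph_def)
  obtain S r where simplex: "is_simplex V E S r" and M: "M = multiplex_of E S"
    using assms(2) by (auto simp: is_multiplex_def)
  have edges: "sub_edges S \<subseteq> E" and "S \<noteq> {}"
    using simplex by (auto simp: is_simplex_def)
  have outside: "w \<notin> Field (multiplex_of E S)" using assms(5) M by simp
  have "(w, u) \<in> E" using assms(3) sym by (auto dest: symD)
  then have adjacent: "S \<subseteq> E `` {w}"
    using simplex_subset_neighbours[OF sym irrefl edges outside] assms(4) M by blast
  let ?K = "colors_of E ({w} \<times> S)"
  have "Field M \<subseteq> ?K `` {w}"
    using Field_multiplex_subset[OF sym irrefl edges outside adjacent] M by blast
  moreover have "w \<in> Field ?K"
    using \<open>S \<noteq> {}\<close> adjacent subset_colors_of[OF sym irrefl, of "{w} \<times> S"] by (force simp: Field_def)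
  ultimately have "insert w (Field M) \<subseteq> Field ?K" by (auto simp: Field_def)
  moreover obtain S' r' where "is_simplex V E S' r'" "?K \<subseteq> multiplex_of E S'"
    using simplex_extend[OF graph simplex _ outside adjacent] assms(3) \<open>E \<subseteq> V \<times> V\<close> by blast
  ultimately show ?thesis
    using that mono_Field by (metis is_multiplex_def order_trans)
qed

lemma Field_multiplex:
  assumes graph: "undirected_graph V E" and "is_multiplex V E M"
  shows "Field M \<subseteq> V" and "Field M \<noteq> {}"
proof -
  have sym: "sym E" and irrefl: "irrefl E" and "E \<subseteq> V \<times> V"
    using graph by (auto simp: undirected_graph_def)
  obtain S r where simplex: "is_simplex V E S r" and M: "M = multiplex_of E S"
    using assms(2) by (auto simp: is_multiplex_def)
  have "M \<subseteq> V \<times> V" using multiplex_of_subset[OF sym irrefl] \<open>E \<subseteq> V \<times> V\<close> M by blast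
  then show "Field M \<subseteq> V" by (auto simp: Field_def)
  have "\<not> card S \<le> Suc 0" "finite S" using simplex by (auto simp: is_simplex_def)
  then obtain a b where "a \<in> S" "b \<in> S" "a \<noteq> b" using card_le_Suc0_iff_eq by blast
  moreover have "sub_edges S \<subseteq> M"
    using sub_edges_subset_multiplex_of[OF sym irrefl] simplex M by (simp add: is_simplex_def)
  ultimately have "(a, b) \<in> M" by (auto simp: sub_edges_def)
  then show "Field M \<noteq> {}" by (auto simp: Field_def)
qed

theorem lemma4p9:
  fixes V :: "'a set" and E :: "('a \<times> 'a) set"
  assumes "undirected_graph V E"
    and "connected_graph V E"
  shows "\<not> (\<exists>M. is_multiplex V E M \<and> spanned M \<noteq> V \<and>
              (\<forall>N. is_multiplex V E N \<and> spanned M \<subseteq> spanned N \<longrightarrow> spanned N = spanned M))"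
proof
  assume "\<exists>M. is_multiplex V E M \<and> spanned M \<noteq> V \<and>
              (\<forall>N. is_multiplex V E N \<and> spanned M \<subseteq> spanned N \<longrightarrow> spanned N = spanned M)"
  then obtain M where M: "is_multiplex V E M" and "Field M \<noteq> V"
    and maximal: "\<And>N. is_multiplex V E N \<Longrightarrow> Field M \<subseteq> Field N \<Longrightarrow> Field N = Field M"
    by (auto simp: spanned_def)
  obtain a b where "a \<in> Field M" "a \<in> V" "b \<in> V" "b \<notin> Field M"
    using Field_multiplex[OF assms(1) M] \<open>Field M \<noteq> V\<close> by blast
  then obtain u w where "(u, w) \<in> E" "u \<in> Field M" "w \<notin> Field M"
    using connected_graph_boundary_edge[OF assms(2)] by blast
  then obtain N where "is_multiplex V E N" "insert w (Field M) \<subseteq> Field N"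
    using exists_multiplex_beyond[OF assms(1) M] by blast
  then show False using maximal \<open>w \<notin> Field M\<close> by blast
qed

end
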